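(* Let $M$ be a connected smooth Riemannian manifold. Let $\omega\in W(\hat M)$ be such that, if $\alpha_M(\omega)<\infty$, then $\omega(t)=\infty_M$ for all $t\ge\alpha_M(\omega)$. Let $\Omega\subset M$ be open and let $\Omega_n\subset\Omega$, $n\in\mathbb N$, be open with $\Omega_n\subset\Omega_{n+1}$, $\omega(0)\in\Omega_1$ and $\bigcup_n\Omega_n=\Omega$. (a) $\alpha_{\Omega_n}(\omega)\nearrow\alpha_\Omega(\omega)$ as $n\to\infty$. (b) If in addition for each $n$ there is an open $\Upsilon_n\subset M$ with $\Upsilon_n\cap\Omega=\Omega_n$ and $\overline\Omega=\bigcup_n(\overline\Omega\cap\Upsilon_n)$, then $\beta_{\Omega_n}(\omega)\nearrow\beta_\Omega(\omega)$ as $n\to\infty$.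
   Context: $\hat M=M\cup\{\infty_M\}$ is the one-point compactification if $M$ is noncompact, $\hat M=M$ if compact; $W(\hat M)$ is the space of continuous paths $[0,\infty)\to\hat M$, and $\mathbb X_t(\omega)=\omega(t)$. For $U\subset\hat M$ open: $\alpha_U(\omega)=\inf\{t>0:\omega(t)\in\hat M\setminus U\}$ and $\beta_U(\omega)=\inf\{t>0:\int_0^t1_{\hat M\setminus U}(\omega(s))ds>0\}$, with $\inf\emptyset=\infty$. Closures $\overline\Omega$ are taken in $M$. *)

theory Defs
  imports "HOL-Analysis.Analysis"
begin

definition topological_manifold :: "'a topology \<Rightarrow> nat \<Rightarrow> bool" where
  "topological_manifold X n \<longleftrightarrow>
     Hausdorff_space X \<and> second_countable X \<and>
     (\<forall>x\<in>topspace X. \<exists>U V. openin X U \<and> x \<in> U \<and> openin (Euclidean_space n) V \<and>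
        (subtopology X U) homeomorphic_space (subtopology (Euclidean_space n) V))"

text \<open>One-point compactification: points of M are Some x, the point at infinity is None.
  If X is compact, the compactification is X itself (no point None).\<close>
definition opc :: "'a topology \<Rightarrow> 'a option topology" where
  "opc X = topology (\<lambda>V.
     (if compact_space X then V \<subseteq> Some ` topspace X \<and> openin X (Some -` V)
      else openin X (Some -` V) \<and>
           (None \<in> V \<longrightarrow> compactin X (topspace X - Some -` V) \<and> closedin X (topspace X - Some -` V))))"

definition path_space :: "'b topology \<Rightarrow> (real \<Rightarrow> 'b) set" where
  "path_space Y = {w. continuous_map (subtopology euclideanreal {0..}) Y w}"

definition alpha_time :: "'b topology \<Rightarrow> 'b set \<Rightarrow> (real \<Rightarrow> 'b) \<Rightarrow> ereal" where
  "alpha_time Y U w = Inf (ereal ` {t. t > 0 \<and> w t \<in> topspace Y - U})"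

definition beta_time :: "'b topology \<Rightarrow> 'b set \<Rightarrow> (real \<Rightarrow> 'b) \<Rightarrow> ereal" where
  "beta_time Y U w = Inf (ereal ` {t. t > 0 \<and>
      integral {0..t} (\<lambda>s. indicator (topspace Y - U) (w s) :: real) > 0})"

end

theory Submission
  imports Defs
begin

text \<open>Both exit times only grow when the domain grows, so the sequences increase and are bounded
  by the exit time from \<open>\<Omega>\<close>. Conversely, for \<open>T\<close> below that exit time the compact
  piece \<open>\<omega>[0,T]\<close> of the path lies in \<open>\<Omega>\<close> (for \<open>\<alpha>\<close>), respectively in
  \<open>\<Union>n \<Upsilon>\<^sub>n\<close> (for \<open>\<beta>\<close>: a path that is outside \<open>\<Omega>\<close>'s closure, or at the absorbing
  point \<open>\<infinity>\<^sub>M\<close>, stays there for a set of times of positive measure). Compactness puts it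
  into a single \<open>\<Omega>\<^sub>n\<close> (respectively \<open>\<Upsilon>\<^sub>1 \<union> \<dots> \<union> \<Upsilon>\<^sub>n\<close>), whence the
  exit time from \<open>\<Omega>\<^sub>n\<close> is at least \<open>T\<close>.\<close>

lemma istopology_opc: "istopology (\<lambda>V.
     (if compact_space X then V \<subseteq> Some ` topspace X \<and> openin X (Some -` V)
      else openin X (Some -` V) \<and>
           (None \<in> V \<longrightarrow> compactin X (topspace X - Some -` V) \<and> closedin X (topspace X - Some -` V))))"
proof -
  have diff_Int: "topspace X - Some -` (S \<inter> T) = (topspace X - Some -` S) \<union> (topspace X - Some -` T)"
    for S T
    by auto
  have "compactin X (topspace X - Some -` \<Union>K)"
    if "openin X (Some -` \<Union>K)" "S \<in> K" "compactin X (topspace X - Some -` S)" for S K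
    by (rule closed_compactin[OF that(3)]) (use that in auto)
  then show ?thesis
    unfolding istopology_def diff_Int
    by (auto simp: vimage_Int vimage_Union intro!: openin_Union compactin_Un closedin_Un)
qed

lemma openin_opc: "openin (opc X) V \<longleftrightarrow>
    (if compact_space X then V \<subseteq> Some ` topspace X \<and> openin X (Some -` V)
     else openin X (Some -` V) \<and>
          (None \<in> V \<longrightarrow> compactin X (topspace X - Some -` V) \<and> closedin X (topspace X - Some -` V)))"
  unfolding opc_def using istopology_opc[of X] by simp

lemma openin_opc_Some: "openin X U \<Longrightarrow> openin (opc X) (Some ` U)"
  unfolding openin_opc using openin_subset[of X U] by (auto simp: inj_vimage_image_eq)

lemma Some_in_topspace_opc: "Some x \<in> topspace (opc X) \<longleftrightarrow> x \<in> topspace X"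
proof -
  have "openin X (Some -` topspace (opc X))"
    using openin_topspace[of "opc X"] unfolding openin_opc by (auto split: if_splits)
  then have "Some -` topspace (opc X) \<subseteq> topspace X"
    by (rule openin_subset)
  moreover have "Some ` topspace X \<subseteq> topspace (opc X)"
    using openin_subset[OF openin_opc_Some[OF openin_topspace]] .
  ultimately show ?thesis
    by blast
qed

lemma Some_in_closure_of_opc:
  assumes "Some x \<in> opc X closure_of (Some ` S)"
  shows "x \<in> X closure_of S"
proof (rule ccontr)
  have "Some x \<in> topspace (opc X)"
    using assms closure_of_subset_topspace by fast
  moreover assume "x \<notin> X closure_of S"
  ultimately obtain T where T: "openin X T" "x \<in> T" "\<forall>y\<in>T. y \<notin> S"
    unfolding in_closure_of Some_in_topspace_opc by blast
  have "\<exists>y \<in> Some ` S. y \<in> Some ` T"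
    using assms openin_opc_Some[OF T(1)] imageI[OF T(2)] unfolding in_closure_of by blast
  then show False
    using T(3) by blast
qed

lemma compactin_subset_Union_atMost:
  fixes V :: "nat \<Rightarrow> 'a set"
  assumes K: "compactin Y K" and V: "\<And>n. openin Y (V n)" and cover: "K \<subseteq> (\<Union>n. V n)"
  shows "\<exists>N. K \<subseteq> (\<Union>n\<le>N. V n)"
proof -
  obtain F where F: "finite F" "F \<subseteq> range V" "K \<subseteq> \<Union>F"
    using K cover V unfolding compactin_def by (metis (no_types, lifting) imageE)
  then obtain I where I: "finite I" "F = V ` I"
    by (meson finite_subset_image)
  have "V i \<subseteq> (\<Union>n\<le>Max (insert 0 I). V n)" if "i \<in> I" for i
    using I(1) that by (intro UN_upper) simp
  then have "\<Union>F \<subseteq> (\<Union>n\<le>Max (insert 0 I). V n)"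
    unfolding I(2) by (rule UN_least)
  then show ?thesis
    using F(3) by (meson order.trans)
qed

lemma path_space_in_topspace: "w \<in> path_space Y \<Longrightarrow> 0 \<le> s \<Longrightarrow> w s \<in> topspace Y"
  unfolding path_space_def continuous_map_def by auto

lemma compactin_path_image: "w \<in> path_space Y \<Longrightarrow> compactin Y (w ` {0..T})"
  unfolding path_space_def
  by (rule image_compactin) (auto simp: compactin_subtopology compactin_euclidean_iff)

lemma path_stays_in_openin:
  assumes w: "w \<in> path_space Y" and V: "openin Y V" and s: "0 \<le> s" "w s \<in> V"
  shows "\<exists>e>0. \<forall>r\<in>{s..s+e}. w r \<in> V"
proof -
  have "openin (subtopology euclideanreal {0..}) {r \<in> {0..}. w r \<in> V}"
    using openin_continuous_map_preimage[OF _ V, of "subtopology euclideanreal {0..}" w] w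
    unfolding path_space_def by simp
  then obtain G where G: "open G" "{r \<in> {0..}. w r \<in> V} = G \<inter> {0..}"
    unfolding openin_subtopology by auto
  moreover have "s \<in> G"
    using G(2) s by auto
  ultimately obtain e where "e > 0" "cball s e \<subseteq> G"
    using open_contains_cball by blast
  then have "\<forall>r\<in>{s..s+e}. w r \<in> V"
    using G(2) s(1) by (auto simp: subset_iff dist_real_def)
  then show ?thesis
    using \<open>e > 0\<close> by blast
qed

lemma integrable_indicator_path_exit:
  assumes w: "w \<in> path_space Y" and U: "openin Y U"
  shows "(\<lambda>s. indicator (topspace Y - U) (w s) :: real) integrable_on {0..t}"
proof -
  have "closedin (subtopology euclideanreal {0..}) {s \<in> {0..}. w s \<in> topspace Y - U}"
    using closedin_continuous_map_preimage[OF _ closedin_diff[OF closedin_topspace U],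
        of "subtopology euclideanreal {0..}" w] w
    unfolding path_space_def by simp
  then have "closed {s \<in> {0..}. w s \<in> topspace Y - U}"
    using closedin_closed_trans by blast
  then have "{s \<in> {0..}. w s \<in> topspace Y - U} \<inter> {0..t} \<in> lmeasurable"
    by (intro lmeasurable_compact closed_Int_compact) auto
  then have "indicat_real {s \<in> {0..}. w s \<in> topspace Y - U} integrable_on {0..t}"
    by (simp only: integrable_on_indicator)
  then show ?thesis
    by (rule integrable_eq) (auto simp: indicator_def)
qed

lemma alpha_time_le: "t > 0 \<Longrightarrow> w t \<in> topspace Y - U \<Longrightarrow> alpha_time Y U w \<le> ereal t"
  unfolding alpha_time_def by (auto intro!: Inf_lower)

lemma ereal_le_alpha_time:
  "(\<And>t. t > 0 \<Longrightarrow> w t \<in> topspace Y - U \<Longrightarrow> T \<le> t) \<Longrightarrow> ereal T \<le> alpha_time Y U w"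
  unfolding alpha_time_def by (auto intro!: Inf_greatest)

lemma alpha_time_nonneg: "0 \<le> alpha_time Y U w"
  using ereal_le_alpha_time[of w Y U 0] by (simp add: zero_ereal_def)

lemma alpha_time_mono: "U \<subseteq> V \<Longrightarrow> alpha_time Y U w \<le> alpha_time Y V w"
  unfolding alpha_time_def by (rule Inf_superset_mono) auto

lemma incseq_alpha_time: "mono U \<Longrightarrow> incseq (\<lambda>n. alpha_time Y (U n) w)"
  by (intro monoI alpha_time_mono) (auto dest: monoD)

lemma beta_time_le:
  "t > 0 \<Longrightarrow> integral {0..t} (\<lambda>s. indicator (topspace Y - U) (w s) :: real) > 0 \<Longrightarrow>
    beta_time Y U w \<le> ereal t"
  unfolding beta_time_def by (auto intro!: Inf_lower)

lemma ereal_le_beta_time: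
  "(\<And>t. t > 0 \<Longrightarrow> integral {0..t} (\<lambda>s. indicator (topspace Y - U) (w s) :: real) > 0 \<Longrightarrow> T \<le> t)
    \<Longrightarrow> ereal T \<le> beta_time Y U w"
  unfolding beta_time_def by (auto intro!: Inf_greatest)

lemma beta_time_nonneg: "0 \<le> beta_time Y U w"
  using ereal_le_beta_time[of Y U w 0] by (simp add: zero_ereal_def)

lemma integral_indicator_le_zero_before_beta_time:
  "0 < t \<Longrightarrow> ereal t < beta_time Y U w \<Longrightarrow>
    integral {0..t} (\<lambda>s. indicator (topspace Y - U) (w s) :: real) \<le> 0"
  using beta_time_le[of t Y U w] by force

lemma beta_time_mono:
  assumes w: "w \<in> path_space Y" and U: "openin Y U" and V: "openin Y V" and "U \<subseteq> V"
  shows "beta_time Y U w \<le> beta_time Y V w"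
  unfolding beta_time_def
proof (rule Inf_superset_mono, clarify)
  fix t assume t: "t > 0" "0 < integral {0..t} (\<lambda>s. indicator (topspace Y - V) (w s) :: real)"
  have "integral {0..t} (\<lambda>s. indicator (topspace Y - V) (w s) :: real)
      \<le> integral {0..t} (\<lambda>s. indicator (topspace Y - U) (w s) :: real)"
    using integrable_indicator_path_exit[OF w U] integrable_indicator_path_exit[OF w V] \<open>U \<subseteq> V\<close>
    by (intro integral_le) (auto simp: indicator_def)
  then show "ereal t \<in> ereal ` {t. 0 < t \<and> 0 < integral {0..t} (\<lambda>s. indicator (topspace Y - U) (w s) :: real)}"
    using t by auto
qed

lemma incseq_beta_time:
  "w \<in> path_space Y \<Longrightarrow> (\<And>n. openin Y (U n)) \<Longrightarrow> mono U \<Longrightarrow> incseq (\<lambda>n. beta_time Y (U n) w)"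
  by (intro monoI beta_time_mono) (auto dest: monoD)

lemma beta_time_le_if_outside_on_interval:
  assumes w: "w \<in> path_space Y" and U: "openin Y U" and ab: "0 \<le> a" "a < b"
    and outside: "\<And>r. r \<in> {a..b} \<Longrightarrow> w r \<in> topspace Y - U"
  shows "beta_time Y U w \<le> ereal b"
proof (rule beta_time_le)
  let ?f = "\<lambda>s. indicator (topspace Y - U) (w s) :: real"
  have "b - a = integral {a..b} (\<lambda>_. 1 :: real)"
    using ab by simp
  also have "\<dots> = integral {a..b} ?f"
    using outside by (intro integral_cong) (simp add: indicator_def)
  also have "\<dots> \<le> integral {0..b} ?f"
    using ab by (intro integral_subset_le integrable_indicator_path_exit[OF w U]
        integrable_on_subinterval[OF integrable_indicator_path_exit[OF w U]]) auto
  finally show "integral {0..b} ?f > 0"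
    using ab by simp
qed (use ab in auto)

lemma path_in_closure_of_before_beta_time:
  assumes w: "w \<in> path_space Y" and U: "openin Y U" and s: "0 \<le> s" "ereal s < beta_time Y U w"
  shows "w s \<in> Y closure_of U"
proof (rule ccontr)
  assume "w s \<notin> Y closure_of U"
  then obtain V where V: "openin Y V" "w s \<in> V" "V \<inter> U = {}"
    using path_space_in_topspace[OF w s(1)] unfolding in_closure_of by blast
  obtain e where e: "e > 0" "\<forall>r\<in>{s..s+e}. w r \<in> V"
    using path_stays_in_openin[OF w V(1) s(1) V(2)] by blast
  obtain T where T: "s < T" "ereal T < beta_time Y U w"
    using ereal_dense2[OF s(2)] by auto
  have "\<forall>r\<in>{s..min (s+e) T}. w r \<in> topspace Y - U"
    using e V openin_subset[OF V(1)] by auto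
  moreover have "s < min (s+e) T"
    using e(1) T(1) by simp
  ultimately have "beta_time Y U w \<le> ereal (min (s+e) T)"
    using beta_time_le_if_outside_on_interval[OF w U s(1)] by blast
  also have "\<dots> \<le> ereal T"
    by simp
  finally show False
    using T(2) by simp
qed

lemma path_avoids_absorbing_point_before_beta_time:
  assumes w: "w \<in> path_space Y" and U: "openin Y U" "U \<subseteq> A" and p: "p \<notin> A" "w 0 \<noteq> p"
    and absorb: "alpha_time Y A w < \<infinity> \<Longrightarrow> \<forall>t\<ge>0. ereal t \<ge> alpha_time Y A w \<longrightarrow> w t = p"
    and s: "0 \<le> s" "ereal s < beta_time Y U w"
  shows "w s \<noteq> p"
proof
  assume ws: "w s = p"
  then have "s > 0"
    using s(1) p(2) by (cases "s = 0") auto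
  moreover have "w s \<in> topspace Y - A"
    using path_space_in_topspace[OF w s(1)] ws p(1) by simp
  ultimately have alpha: "alpha_time Y A w \<le> ereal s"
    by (rule alpha_time_le)
  obtain T where T: "s < T" "ereal T < beta_time Y U w"
    using ereal_dense2[OF s(2)] by auto
  have "alpha_time Y A w < \<infinity>"
    using alpha by (rule le_less_trans) simp
  have "w r = p" if "r \<in> {s..T}" for r
  proof -
    have "alpha_time Y A w \<le> ereal r"
      using alpha that by (meson atLeastAtMost_iff ereal_less_eq(3) order.trans)
    then show ?thesis
      using absorb[OF \<open>alpha_time Y A w < \<infinity>\<close>] that s(1) by auto
  qed
  then have "\<forall>r\<in>{s..T}. w r \<in> topspace Y - U"
    using ws path_space_in_topspace[OF w s(1)] p(1) U(2) by auto
  then have "beta_time Y U w \<le> ereal T"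
    using beta_time_le_if_outside_on_interval[OF w U(1) s(1) T(1)] by blast
  then show False
    using T(2) by simp
qed

lemma incseq_tendsto_ereal_lub:
  fixes f :: "nat \<Rightarrow> ereal"
  assumes "incseq f" and le: "\<And>n. f n \<le> L" and "0 \<le> f 0"
    and reach: "\<And>T. 0 < T \<Longrightarrow> ereal T < L \<Longrightarrow> \<exists>N. ereal T \<le> f N"
  shows "f \<longlonglongrightarrow> L"
proof -
  have upper: "f N \<le> (SUP n. f n)" for N
    by (rule SUP_upper) simp
  have "L \<le> (SUP n. f n)"
  proof (rule ccontr)
    assume "\<not> L \<le> (SUP n. f n)"
    then have "(SUP n. f n) < L"
      by simp
    then obtain T where T: "(SUP n. f n) < ereal T" "ereal T < L"
      using ereal_dense2 by blast
    have "0 < T"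
    proof (rule ccontr)
      assume "\<not> 0 < T"
      then have "ereal T \<le> 0"
        by (simp add: zero_ereal_def)
      then have "ereal T \<le> f 0"
        using \<open>0 \<le> f 0\<close> by (rule order.trans)
      then show False
        using order.trans[OF _ upper[of 0]] T(1) by (simp add: not_le[symmetric])
    qed
    then obtain N where "ereal T \<le> f N"
      using reach T(2) by blast
    then show False
      using order.trans[OF _ upper[of N]] T(1) by (simp add: not_le[symmetric])
  qed
  then have "(SUP n. f n) = L"
    using le by (intro antisym SUP_least) auto
  then show ?thesis
    using LIMSEQ_SUP[OF \<open>incseq f\<close>] by simp
qed

lemma alpha_time_tendsto_Union:
  assumes w: "w \<in> path_space Y" and U: "\<And>n. openin Y (U n)" "mono U" and w0: "w 0 \<in> (\<Union>n. U n)"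
  shows "(\<lambda>n. alpha_time Y (U n) w) \<longlonglongrightarrow> alpha_time Y (\<Union>n. U n) w"
proof (rule incseq_tendsto_ereal_lub)
  show "incseq (\<lambda>n. alpha_time Y (U n) w)"
    using \<open>mono U\<close> by (rule incseq_alpha_time)
  show "alpha_time Y (U n) w \<le> alpha_time Y (\<Union>n. U n) w" for n
    by (intro alpha_time_mono) auto
  fix T assume "0 < T" and T: "ereal T < alpha_time Y (\<Union>n. U n) w"
  have "w s \<in> (\<Union>n. U n)" if "s \<in> {0..T}" for s
  proof (cases "s = 0")
    case False
    then have "s > 0"
      using that by simp
    have "ereal s < alpha_time Y (\<Union>n. U n) w"
      using that by (intro le_less_trans[OF _ T]) simp
    then have "w s \<notin> topspace Y - (\<Union>n. U n)"
      using alpha_time_le[of s w Y "\<Union>n. U n"] \<open>s > 0\<close> by (auto simp: not_le[symmetric])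
    then show ?thesis
      using path_space_in_topspace[OF w, of s] \<open>s > 0\<close> by auto
  next
    case True
    then show ?thesis
      using w0 by simp
  qed
  then have "w ` {0..T} \<subseteq> (\<Union>n. U n)"
    by (rule image_subsetI)
  then obtain N where "w ` {0..T} \<subseteq> (\<Union>n\<le>N. U n)"
    using compactin_subset_Union_atMost[where V = U, OF compactin_path_image[OF w] U(1)] by blast
  also have "\<dots> \<subseteq> U N"
  proof (rule UN_least)
    fix n assume "n \<in> {..N}"
    then show "U n \<subseteq> U N"
      by (intro monoD[OF \<open>mono U\<close>]) simp
  qed
  finally have N: "w ` {0..T} \<subseteq> U N" .
  have "ereal T \<le> alpha_time Y (U N) w"
  proof (rule ereal_le_alpha_time, rule ccontr)
    fix t assume "0 < t" "w t \<in> topspace Y - U N" "\<not> T \<le> t"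
    then have "t \<in> {0..T}"
      by simp
    then show False
      using N \<open>w t \<in> topspace Y - U N\<close> by blast
  qed
  then show "\<exists>N. ereal T \<le> alpha_time Y (U N) w" ..
qed (simp add: alpha_time_nonneg)

lemma beta_time_tendsto:
  assumes w: "w \<in> path_space Y"
    and U: "openin Y U" and Un: "\<And>n. openin Y (U' n)" "mono U'" "\<And>n. U' n \<subseteq> U"
    and V: "\<And>n. openin Y (V n)" "\<And>n. V n \<inter> U \<subseteq> U' n"
    and cover: "\<And>s. 0 \<le> s \<Longrightarrow> ereal s < beta_time Y U w \<Longrightarrow> w s \<in> (\<Union>n. V n)"
  shows "(\<lambda>n. beta_time Y (U' n) w) \<longlonglongrightarrow> beta_time Y U w"
proof (rule incseq_tendsto_ereal_lub)
  show "incseq (\<lambda>n. beta_time Y (U' n) w)"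
    using w Un(1,2) by (rule incseq_beta_time)
  show "beta_time Y (U' n) w \<le> beta_time Y U w" for n
    by (intro beta_time_mono[OF w Un(1) U] Un(3))
  fix T assume "0 < T" and T: "ereal T < beta_time Y U w"
  have "w ` {0..T} \<subseteq> (\<Union>n. V n)"
  proof (rule image_subsetI, rule cover)
    fix s assume "s \<in> {0..T}"
    then show "0 \<le> s" "ereal s < beta_time Y U w"
      by (auto intro: le_less_trans[OF _ T])
  qed
  then obtain N where N: "w ` {0..T} \<subseteq> (\<Union>n\<le>N. V n)"
    using compactin_subset_Union_atMost[where V = V, OF compactin_path_image[OF w] V(1)] by blast
  have "V n \<inter> U \<subseteq> U' N" if "n \<le> N" for n
    using V(2)[of n] monoD[OF Un(2) that] by blast
  then have VN: "(\<Union>n\<le>N. V n) \<inter> U \<subseteq> U' N"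
    by blast
  have "ereal T \<le> beta_time Y (U' N) w"
  proof (rule ereal_le_beta_time, rule ccontr)
    fix t assume t: "0 < t" "0 < integral {0..t} (\<lambda>s. indicator (topspace Y - U' N) (w s) :: real)"
      and "\<not> T \<le> t"
    have "w r \<in> (\<Union>n\<le>N. V n)" if "r \<in> {0..t}" for r
    proof -
      have "r \<in> {0..T}"
        using that \<open>\<not> T \<le> t\<close> by auto
      then show ?thesis
        using N by blast
    qed
    then have "integral {0..t} (\<lambda>s. indicator (topspace Y - U' N) (w s) :: real)
        \<le> integral {0..t} (\<lambda>s. indicator (topspace Y - U) (w s) :: real)"
      using VN by (intro integral_le integrable_indicator_path_exit[OF w] Un(1) U)
        (auto simp: indicator_def)
    also have "\<dots> \<le> 0"
      by (intro integral_indicator_le_zero_before_beta_time t(1) less_trans[OF _ T])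
        (use \<open>\<not> T \<le> t\<close> in simp)
    finally show False
      using t(2) by simp
  qed
  then show "\<exists>N. ereal T \<le> beta_time Y (U' N) w" ..
qed (simp add: beta_time_nonneg)

lemma path_in_Some_closure_of_before_beta_time:
  assumes w: "w \<in> path_space (opc X)" and \<Omega>: "openin X \<Omega>" and "w 0 \<noteq> None"
    and absorb: "alpha_time (opc X) (Some ` topspace X) w < \<infinity> \<Longrightarrow>
        \<forall>t\<ge>0. ereal t \<ge> alpha_time (opc X) (Some ` topspace X) w \<longrightarrow> w t = None"
    and s: "0 \<le> s" "ereal s < beta_time (opc X) (Some ` \<Omega>) w"
  shows "w s \<in> Some ` (X closure_of \<Omega>)"
proof -
  have "w s \<in> opc X closure_of (Some ` \<Omega>)"
    by (rule path_in_closure_of_before_beta_time[OF w openin_opc_Some[OF \<Omega>] s])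
  moreover have "w s \<noteq> None"
    by (rule path_avoids_absorbing_point_before_beta_time[OF w openin_opc_Some[OF \<Omega>] _ _
          \<open>w 0 \<noteq> None\<close> absorb s])
      (use openin_subset[OF \<Omega>] in auto)
  ultimately show ?thesis
    by (cases "w s") (auto dest: Some_in_closure_of_opc)
qed

lemma beta_time_opc_tendsto:
  fixes \<Upsilon> :: "nat \<Rightarrow> 'a set"
  assumes w: "w \<in> path_space (opc X)"
    and absorb: "alpha_time (opc X) (Some ` topspace X) w < \<infinity> \<Longrightarrow>
        \<forall>t\<ge>0. ereal t \<ge> alpha_time (opc X) (Some ` topspace X) w \<longrightarrow> w t = None"
    and \<Omega>: "openin X \<Omega>" and \<Omega>s: "\<And>n. openin X (\<Omega>s n)" "mono \<Omega>s" "\<And>n. \<Omega>s n \<subseteq> \<Omega>"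
    and "w 0 \<noteq> None"
    and \<Upsilon>: "\<And>n. openin X (\<Upsilon> n)" "\<And>n. \<Upsilon> n \<inter> \<Omega> \<subseteq> \<Omega>s n"
    and closure: "X closure_of \<Omega> \<subseteq> (\<Union>n. \<Upsilon> n)"
  shows "(\<lambda>n. beta_time (opc X) (Some ` \<Omega>s n) w) \<longlonglongrightarrow> beta_time (opc X) (Some ` \<Omega>) w"
proof (rule beta_time_tendsto[where V = "\<lambda>n. Some ` \<Upsilon> n",
      OF w openin_opc_Some[OF \<Omega>] openin_opc_Some[OF \<Omega>s(1)]])
  show "mono (\<lambda>n. Some ` \<Omega>s n)"
    using \<Omega>s(2) by (auto simp: mono_def)
  fix s assume "0 \<le> s" "ereal s < beta_time (opc X) (Some ` \<Omega>) w"
  then have "w s \<in> Some ` (X closure_of \<Omega>)"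
    using path_in_Some_closure_of_before_beta_time[OF w \<Omega> _ absorb] \<open>w 0 \<noteq> None\<close> by blast
  then show "w s \<in> (\<Union>n. Some ` \<Upsilon> n)"
    using closure by blast
next
  show "Some ` \<Omega>s n \<subseteq> Some ` \<Omega>" for n
    using \<Omega>s(3) by (rule image_mono)
  show "openin (opc X) (Some ` \<Upsilon> n)" for n
    using \<Upsilon>(1) by (rule openin_opc_Some)
  show "Some ` \<Upsilon> n \<inter> Some ` \<Omega> \<subseteq> Some ` \<Omega>s n" for n
    using \<Upsilon>(2)[of n] by auto
qed

theorem mainTheorem4:
  fixes X :: "'a topology" and d :: nat and w :: "real \<Rightarrow> 'a option"
    and \<Omega> :: "'a set" and \<Omega>s :: "nat \<Rightarrow> 'a set"
  assumes manifold: "topological_manifold X d" and conn: "connected_space X"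
    and w_path: "w \<in> path_space (opc X)"
    and w_absorb: "alpha_time (opc X) (Some ` topspace X) w < \<infinity> \<Longrightarrow>
        (\<forall>t\<ge>0. ereal t \<ge> alpha_time (opc X) (Some ` topspace X) w \<longrightarrow> w t = None)"
    and \<Omega>_open: "openin X \<Omega>"
    and \<Omega>s_open: "\<And>n. openin X (\<Omega>s n)"
    and \<Omega>s_sub: "\<And>n. \<Omega>s n \<subseteq> \<Omega>"
    and \<Omega>s_mono: "\<And>n. \<Omega>s n \<subseteq> \<Omega>s (Suc n)"
    and start: "w 0 \<in> Some ` \<Omega>s 0"
    and \<Omega>s_union: "(\<Union>n. \<Omega>s n) = \<Omega>"
  shows "(incseq (\<lambda>n. alpha_time (opc X) (Some ` \<Omega>s n) w) \<and>
         (\<lambda>n. alpha_time (opc X) (Some ` \<Omega>s n) w) \<longlonglongrightarrow> alpha_time (opc X) (Some ` \<Omega>) w) \<and>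
         ((\<exists>\<Upsilon> :: nat \<Rightarrow> 'a set. (\<forall>n. openin X (\<Upsilon> n) \<and> \<Upsilon> n \<inter> \<Omega> = \<Omega>s n) \<and>
             X closure_of \<Omega> = (\<Union>n. X closure_of \<Omega> \<inter> \<Upsilon> n)) \<longrightarrow>
         incseq (\<lambda>n. beta_time (opc X) (Some ` \<Omega>s n) w) \<and>
         (\<lambda>n. beta_time (opc X) (Some ` \<Omega>s n) w) \<longlonglongrightarrow> beta_time (opc X) (Some ` \<Omega>) w)"
proof -
  have "mono \<Omega>s"
    using \<Omega>s_mono by (simp add: mono_iff_le_Suc)
  then have mono_Some_\<Omega>s: "mono (\<lambda>n. Some ` \<Omega>s n)"
    by (auto simp: mono_def)
  have Some_\<Omega>s_open: "openin (opc X) (Some ` \<Omega>s n)" for n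
    by (rule openin_opc_Some[OF \<Omega>s_open])
  have "(\<Union>n. Some ` \<Omega>s n) = Some ` \<Omega>"
    using \<Omega>s_union by blast
  then have alpha_lim: "(\<lambda>n. alpha_time (opc X) (Some ` \<Omega>s n) w) \<longlonglongrightarrow> alpha_time (opc X) (Some ` \<Omega>) w"
    using alpha_time_tendsto_Union[OF w_path Some_\<Omega>s_open mono_Some_\<Omega>s] start by auto
  have beta_lim: "(\<lambda>n. beta_time (opc X) (Some ` \<Omega>s n) w) \<longlonglongrightarrow> beta_time (opc X) (Some ` \<Omega>) w"
    if \<Upsilon>: "\<forall>n. openin X (\<Upsilon> n) \<and> \<Upsilon> n \<inter> \<Omega> = \<Omega>s n"
      and closure: "X closure_of \<Omega> = (\<Union>n. X closure_of \<Omega> \<inter> \<Upsilon> n)" for \<Upsilon>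
  proof (rule beta_time_opc_tendsto[where \<Upsilon> = \<Upsilon>,
        OF w_path w_absorb \<Omega>_open \<Omega>s_open \<open>mono \<Omega>s\<close> \<Omega>s_sub])
    show "X closure_of \<Omega> \<subseteq> (\<Union>n. \<Upsilon> n)"
      by (subst closure) blast
  qed (use \<Upsilon> start in auto)
  show ?thesis
  proof (intro conjI impI)
    show "incseq (\<lambda>n. alpha_time (opc X) (Some ` \<Omega>s n) w)"
      by (rule incseq_alpha_time[OF mono_Some_\<Omega>s])
    show "incseq (\<lambda>n. beta_time (opc X) (Some ` \<Omega>s n) w)"
      by (rule incseq_beta_time[OF w_path Some_\<Omega>s_open mono_Some_\<Omega>s])
  next
    assume "\<exists>\<Upsilon>. (\<forall>n. openin X (\<Upsilon> n) \<and> \<Upsilon> n \<inter> \<Omega> = \<Omega>s n) \<and>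
        X closure_of \<Omega> = (\<Union>n. X closure_of \<Omega> \<inter> \<Upsilon> n)"
    then show "(\<lambda>n. beta_time (opc X) (Some ` \<Omega>s n) w) \<longlonglongrightarrow> beta_time (opc X) (Some ` \<Omega>) w"
      by (elim exE conjE) (rule beta_lim)
  qed (rule alpha_lim)
qed

end
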